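(* Let $n\ge 6$ be even, and let $d_*=(\epsilon_1,\dots,\epsilon_{n-1},h)$ and $d_*'=(\epsilon_1',\dots,\epsilon_{n-1}',h')$ be neighbors with $d_*\ne d_*'$. Then for all $j_1,j_2$ with $1\le j_1\le j_2\le n-1$, \[\left|\sum_{j=j_1}^{j_2}(\epsilon'_j-\epsilon_j)\right|\le 2.\] Further, $|h-h'|\le 2$, or $|h|=\frac n2-1$ and $h'=-h$.
   Context: Symbols are $[1,n]$; $\mathrm{dist}(a,b)$ is the minimum of the residues of $a-b$ and $b-a$ mod $n$ (in $[0,n-1]$). A Latin row is a permutation $(s_1,\dots,s_n)$ of $[1,n]$. Its extended difference row is $(\epsilon_1,\dots,\epsilon_{n-1},h)$ where, with $h_j\in[0,n-1]$, $h_j\equiv s_{j+1}-s_j\pmod n$ ($1\le j\le n-1$), $h_n\equiv s_1-s_n\pmod n$, one sets $\epsilon_j=h_j-\frac n2$, $h=h_n-\frac n2$ (integers). A Latin rectangle is a matrix over $[1,n]$ with no repeats in any row or column; its inner distance is the minimum of $\mathrm{dist}$ over symbols in horizontally or vertically adjacent cells. Two extended difference rows of Latin rows of inner distance $\frac n2-1$ (inner distance of a row being $\min_j\mathrm{dist}(s_j,s_{j+1})$) are neighbors if there exist Latin rows $r,r'$ with these extended difference rows such that the $2\times n$ matrix with rows $r$ and $r'$ is a Latin rectangle of inner distance $\frac n2-1$. *)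

theory Defs
  imports Main
begin

definition cdist :: "nat \<Rightarrow> int \<Rightarrow> int \<Rightarrow> int" where
  "cdist n a b = min ((a - b) mod int n) ((b - a) mod int n)"

definition latin_row :: "nat \<Rightarrow> (nat \<Rightarrow> int) \<Rightarrow> bool" where
  "latin_row n s \<longleftrightarrow> bij_betw s {1..n} {1..int n}"

definition row_inner_dist :: "nat \<Rightarrow> (nat \<Rightarrow> int) \<Rightarrow> int" where
  "row_inner_dist n s = Min ((\<lambda>j. cdist n (s j) (s (j+1))) ` {1..n-1})"

text \<open>Extended difference row (eps_1, ..., eps_{n-1}, h) as a list of length n:
  entry j-1 is eps_j for 1 <= j <= n-1, and entry n-1 is h.\<close>
definition ext_diff_row :: "nat \<Rightarrow> (nat \<Rightarrow> int) \<Rightarrow> int list" where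
  "ext_diff_row n s =
     map (\<lambda>j. (s (j+1) - s j) mod int n - int n div 2) [1..<n]
     @ [(s 1 - s n) mod int n - int n div 2]"

definition rect2_inner_dist :: "nat \<Rightarrow> (nat \<Rightarrow> int) \<Rightarrow> (nat \<Rightarrow> int) \<Rightarrow> int" where
  "rect2_inner_dist n r r' =
     Min ((\<lambda>j. cdist n (r j) (r (j+1))) ` {1..n-1}
        \<union> (\<lambda>j. cdist n (r' j) (r' (j+1))) ` {1..n-1}
        \<union> (\<lambda>j. cdist n (r j) (r' j)) ` {1..n})"

definition latin_rect2 :: "nat \<Rightarrow> (nat \<Rightarrow> int) \<Rightarrow> (nat \<Rightarrow> int) \<Rightarrow> bool" where
  "latin_rect2 n r r' \<longleftrightarrow> latin_row n r \<and> latin_row n r' \<and> (\<forall>j\<in>{1..n}. r j \<noteq> r' j)"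

definition admissible_diff_row :: "nat \<Rightarrow> int list \<Rightarrow> bool" where
  "admissible_diff_row n d \<longleftrightarrow>
     (\<exists>s. latin_row n s \<and> row_inner_dist n s = int n div 2 - 1 \<and> ext_diff_row n s = d)"

definition neighbors :: "nat \<Rightarrow> int list \<Rightarrow> int list \<Rightarrow> bool" where
  "neighbors n d d' \<longleftrightarrow> admissible_diff_row n d \<and> admissible_diff_row n d' \<and>
     (\<exists>r r'. latin_rect2 n r r' \<and> ext_diff_row n r = d \<and> ext_diff_row n r' = d'
        \<and> rect2_inner_dist n r r' = int n div 2 - 1)"

end

theory Submission
  imports Defs
begin

text \<open>Write \<open>m = n/2\<close>. Inner distance \<open>m - 1\<close> forces every horizontal and every vertical
  difference of the two rows to be congruent to \<open>m - 1\<close>, \<open>m\<close> or \<open>m + 1\<close> modulo \<open>n\<close>. Going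
  around a \<open>2 \<times> 2\<close> square, the change \<open>\<epsilon>'\<^sub>j - \<epsilon>\<^sub>j\<close> of the horizontal residues and the change
  \<open>\<delta>\<^sub>j\<^sub>+\<^sub>1 - \<delta>\<^sub>j\<close> of the vertical residues \<open>\<delta>\<^sub>j = (r'\<^sub>j - r\<^sub>j) mod n\<close> agree modulo \<open>n\<close> and both
  lie in \<open>[-2, 2]\<close>, so they are equal because \<open>n > 4\<close>. Hence the partial sums telescope to
  \<open>\<delta>\<^sub>j\<^sub>2\<^sub>+\<^sub>1 - \<delta>\<^sub>j\<^sub>1 \<in> [-2, 2]\<close>. For the wrap-around entries only \<open>h, h' \<in> [1 - m, m - 1]\<close> is known,
  so \<open>h' - h\<close> equals \<open>\<delta>\<^sub>1 - \<delta>\<^sub>n\<close> only up to \<open>\<plusminus>n\<close>, and the case \<open>\<plusminus>n\<close> forces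
  \<open>{h, h'} = {1 - m, m - 1}\<close>.\<close>

lemma dvd_abs_less_imp_zero:
  fixes x N :: int
  assumes "N dvd x" and "\<bar>x\<bar> < N"
  shows "x = 0"
  using dvd_imp_le_int[of x N] assms by linarith

lemma dvd_mod_diff_square:
  fixes a b a' b' N :: int
  shows "N dvd ((b' - a') mod N - (b - a) mod N - ((b' - b) mod N - (a' - a) mod N))"
proof -
  have "((b' - a') - (b - a)) mod N = ((b' - b) - (a' - a)) mod N"
    by (simp add: algebra_simps)
  then have "((b' - a') mod N - (b - a) mod N) mod N = ((b' - b) mod N - (a' - a) mod N) mod N"
    by (simp only: mod_diff_eq)
  then show ?thesis by (simp add: mod_eq_dvd_iff)
qed

lemma mod_diff_square_eq:
  fixes a b a' b' c N :: int
  assumes "4 < N"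
    and "(b - a) mod N \<in> {c - 1..c + 1}" "(b' - a') mod N \<in> {c - 1..c + 1}"
    and "(a' - a) mod N \<in> {c - 1..c + 1}" "(b' - b) mod N \<in> {c - 1..c + 1}"
  shows "(b' - a') mod N - (b - a) mod N = (b' - b) mod N - (a' - a) mod N"
proof -
  let ?D = "(b' - a') mod N - (b - a) mod N - ((b' - b) mod N - (a' - a) mod N)"
  have "\<bar>?D\<bar> < N" using assms by auto
  then have "?D = 0" using dvd_mod_diff_square by (rule dvd_abs_less_imp_zero[rotated])
  then show ?thesis by simp
qed

lemma mod_diff_square_cases:
  fixes a b a' b' c N :: int
  assumes N: "0 < N"
    and "(b - a) mod N \<noteq> 0" "(b' - a') mod N \<noteq> 0"
    and "(a' - a) mod N \<in> {c - 1..c + 1}" "(b' - b) mod N \<in> {c - 1..c + 1}"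
  shows "\<bar>(b' - a') mod N - (b - a) mod N\<bar> \<le> 2
    \<or> (b - a) mod N = 1 \<and> (b' - a') mod N = N - 1
    \<or> (b - a) mod N = N - 1 \<and> (b' - a') mod N = 1"
proof -
  let ?D = "(b' - a') mod N - (b - a) mod N - ((b' - b) mod N - (a' - a) mod N)"
  have range: "1 \<le> (b - a) mod N" "(b - a) mod N \<le> N - 1"
    "1 \<le> (b' - a') mod N" "(b' - a') mod N \<le> N - 1"
    using assms(2,3) pos_mod_sign[OF N, of "b - a"] pos_mod_bound[OF N, of "b - a"]
      pos_mod_sign[OF N, of "b' - a'"] pos_mod_bound[OF N, of "b' - a'"] by linarith+
  moreover have shifts: "c - 1 \<le> (a' - a) mod N" "(a' - a) mod N \<le> c + 1"
    "c - 1 \<le> (b' - b) mod N" "(b' - b) mod N \<le> c + 1"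
    using assms(4,5) by auto
  ultimately have "\<bar>?D\<bar> \<le> N" by linarith
  then consider "\<bar>?D\<bar> < N" | "?D = N" | "?D = - N" by linarith
  then show ?thesis
  proof cases
    case 1
    then have "?D = 0" using dvd_mod_diff_square by (rule dvd_abs_less_imp_zero[rotated])
    then show ?thesis using shifts by auto
  next
    case 2
    then have "(b - a) mod N = 1" "(b' - a') mod N = N - 1" using range shifts by linarith+
    then show ?thesis by simp
  next
    case 3
    then have "(b - a) mod N = N - 1" "(b' - a') mod N = 1" using range shifts by linarith+
    then show ?thesis by simp
  qed
qed

lemma cdist_ge_imp_mod_near_half:
  assumes "even n" "4 \<le> n" "int n div 2 - 1 \<le> cdist n a b"
  shows "(b - a) mod int n \<in> {int n div 2 - 1..int n div 2 + 1}"
proof -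
  obtain m where n: "n = 2 * m" using assms(1) by blast
  define x where "x = (b - a) mod int n"
  have x: "0 \<le> x" "x < int n" using assms(2) by (auto simp: x_def)
  have "(a - b) mod int n = (if x = 0 then 0 else int n - x)"
    unfolding x_def by (metis minus_diff_eq zmod_zminus1_eq_if)
  then have "int m - 1 \<le> min (if x = 0 then 0 else int n - x) x"
    using assms(3) n by (simp add: cdist_def x_def)
  moreover have "int n div 2 = int m" using n by simp
  ultimately show ?thesis
    unfolding x_def[symmetric] using x n assms(2) by (auto split: if_splits)
qed

lemma latin_row_wrap_mod_nonzero:
  assumes "latin_row n s" "2 \<le> n"
  shows "(s 1 - s n) mod int n \<noteq> 0"
proof
  assume "(s 1 - s n) mod int n = 0"
  moreover have ne: "s 1 \<noteq> s n" and "s 1 \<in> {1..int n}" "s n \<in> {1..int n}"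
    using assms unfolding latin_row_def bij_betw_def by (auto dest: inj_onD)
  ultimately have "s 1 - s n = 0"
    by (intro dvd_abs_less_imp_zero) (auto simp: dvd_eq_mod_eq_0)
  with ne show False by simp
qed

lemma ext_diff_row_nth:
  assumes "j \<in> {1..n - 1}"
  shows "ext_diff_row n s ! (j - 1) = (s (j + 1) - s j) mod int n - int n div 2"
  using assms by (auto simp: ext_diff_row_def nth_append)

lemma ext_diff_row_last:
  assumes "1 \<le> n"
  shows "ext_diff_row n s ! (n - 1) = (s 1 - s n) mod int n - int n div 2"
  using assms by (simp add: ext_diff_row_def nth_append)

lemma rect2_inner_dist_le_cdist:
  shows "j \<in> {1..n - 1} \<Longrightarrow> rect2_inner_dist n r r' \<le> cdist n (r j) (r (j + 1))"
    and "j \<in> {1..n - 1} \<Longrightarrow> rect2_inner_dist n r r' \<le> cdist n (r' j) (r' (j + 1))"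
    and "j \<in> {1..n} \<Longrightarrow> rect2_inner_dist n r r' \<le> cdist n (r j) (r' j)"
  by (auto simp: rect2_inner_dist_def intro!: Min_le)

locale distant_row_pair =
  fixes n :: nat and r r' :: "nat \<Rightarrow> int"
  assumes even: "even n" and n_ge: "6 \<le> n"
    and latin: "latin_row n r" "latin_row n r'"
    and inner_dist: "int n div 2 - 1 \<le> rect2_inner_dist n r r'"
begin

definition col_shift :: "nat \<Rightarrow> int" where
  "col_shift j = (r' j - r j) mod int n"

lemma cdist_mod_near_half:
  assumes "rect2_inner_dist n r r' \<le> cdist n a b"
  shows "(b - a) mod int n \<in> {int n div 2 - 1..int n div 2 + 1}"
  using cdist_ge_imp_mod_near_half[OF even _ order_trans[OF inner_dist assms]] n_ge by simp

lemma row_steps_near_half: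
  assumes "j \<in> {1..n - 1}"
  shows "(r (j + 1) - r j) mod int n \<in> {int n div 2 - 1..int n div 2 + 1}"
    and "(r' (j + 1) - r' j) mod int n \<in> {int n div 2 - 1..int n div 2 + 1}"
  using cdist_mod_near_half rect2_inner_dist_le_cdist(1,2)[OF assms] by blast+

lemma col_shift_near_half:
  assumes "j \<in> {1..n}"
  shows "col_shift j \<in> {int n div 2 - 1..int n div 2 + 1}"
  unfolding col_shift_def using cdist_mod_near_half rect2_inner_dist_le_cdist(3)[OF assms] by blast

lemma ext_diff_row_change:
  assumes j: "j \<in> {1..n - 1}"
  shows "ext_diff_row n r' ! (j - 1) - ext_diff_row n r ! (j - 1)
    = col_shift (Suc j) - col_shift j"
proof -
  have "j \<in> {1..n}" "j + 1 \<in> {1..n}" using j by auto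
  then have "(r' (j + 1) - r' j) mod int n - (r (j + 1) - r j) mod int n
      = col_shift (j + 1) - col_shift j"
    unfolding col_shift_def using n_ge
    by (intro mod_diff_square_eq[where c = "int n div 2"] row_steps_near_half[OF j]
        col_shift_near_half[unfolded col_shift_def]) simp_all
  then show ?thesis using ext_diff_row_nth[OF j, of r] ext_diff_row_nth[OF j, of r'] by simp
qed

lemma ext_diff_row_partial_sum_bound:
  assumes "1 \<le> j1" "j1 \<le> j2" "j2 \<le> n - 1"
  shows "\<bar>\<Sum>j = j1..j2. ext_diff_row n r' ! (j - 1) - ext_diff_row n r ! (j - 1)\<bar> \<le> 2"
proof -
  have "(\<Sum>j = j1..j2. ext_diff_row n r' ! (j - 1) - ext_diff_row n r ! (j - 1))
      = (\<Sum>j = j1..j2. col_shift (Suc j) - col_shift j)"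
    by (intro sum.cong refl) (use assms ext_diff_row_change in auto)
  also have "\<dots> = col_shift (Suc j2) - col_shift j1"
    using assms(2) by (intro sum_Suc_diff) simp
  also have "\<bar>\<dots>\<bar> \<le> 2"
  proof -
    have "j1 \<in> {1..n}" "Suc j2 \<in> {1..n}" using assms by auto
    from this[THEN col_shift_near_half] show ?thesis by auto
  qed
  finally show ?thesis .
qed

lemma ext_diff_row_last_change:
  defines "h \<equiv> ext_diff_row n r ! (n - 1)" and "h' \<equiv> ext_diff_row n r' ! (n - 1)"
  shows "\<bar>h - h'\<bar> \<le> 2 \<or> \<bar>h\<bar> = int n div 2 - 1 \<and> h' = - h"
proof -
  have "\<bar>(r' 1 - r' n) mod int n - (r 1 - r n) mod int n\<bar> \<le> 2
    \<or> (r 1 - r n) mod int n = 1 \<and> (r' 1 - r' n) mod int n = int n - 1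
    \<or> (r 1 - r n) mod int n = int n - 1 \<and> (r' 1 - r' n) mod int n = 1"
    using n_ge
    by (intro mod_diff_square_cases[where c = "int n div 2"] latin_row_wrap_mod_nonzero latin
        col_shift_near_half[unfolded col_shift_def]) simp_all
  moreover have "h = (r 1 - r n) mod int n - int n div 2"
    and "h' = (r' 1 - r' n) mod int n - int n div 2"
    using n_ge ext_diff_row_last[of n r] ext_diff_row_last[of n r'] by (simp_all add: h_def h'_def)
  ultimately show ?thesis using even n_ge by (auto elim!: evenE)
qed

end

theorem mainTheorem16:
  fixes n :: nat and d d' :: "int list"
  assumes "n \<ge> 6" and "even n"
    and "neighbors n d d'" and "d \<noteq> d'"
  shows "(\<forall>j1 j2. 1 \<le> j1 \<and> j1 \<le> j2 \<and> j2 \<le> n - 1 \<longrightarrow>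
            \<bar>\<Sum>j = j1..j2. (d' ! (j - 1) - d ! (j - 1))\<bar> \<le> 2)
       \<and> (\<bar>d ! (n - 1) - d' ! (n - 1)\<bar> \<le> 2
          \<or> (\<bar>d ! (n - 1)\<bar> = int n div 2 - 1 \<and> d' ! (n - 1) = - (d ! (n - 1))))"
proof -
  obtain r r' where rect: "latin_rect2 n r r'" "rect2_inner_dist n r r' = int n div 2 - 1"
    and rows: "ext_diff_row n r = d" "ext_diff_row n r' = d'"
    using assms(3) unfolding neighbors_def by blast
  interpret distant_row_pair n r r'
    using assms(1,2) rect by unfold_locales (auto simp: latin_rect2_def)
  show ?thesis
    using ext_diff_row_partial_sum_bound ext_diff_row_last_change unfolding rows by blast
qed

end
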